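(* For all integers $n,k,s,b$ with $n \geq k \geq s > b \geq 0$, $n > 0$ and $n \geq k+s-b$, there exists an $(n,k,s,b)$-oriented graph.
   Context: An oriented graph is a digraph with no loops and no pair of symmetric arcs. For vertices $u,v$ write $u(1\text{-}0)v$ if there is an arc from $u$ to $v$, and $u(0\text{-}0)v$ if there is no arc between $u$ and $v$. A vertex $v$ is weakly reachable within two steps from $u$ if $u(1\text{-}0)v$, or $u(0\text{-}0)v$, or for some vertex $w$ one has $u(1\text{-}0)w(1\text{-}0)v$, or $u(1\text{-}0)w(0\text{-}0)v$, or $u(0\text{-}0)w(1\text{-}0)v$. A vertex $u$ is a weak king if every other vertex is weakly reachable within two steps from $u$, and a weak serf if $u$ is weakly reachable within two steps from every other vertex. An $(n,k,s,b)$-oriented graph is an oriented graph on $n$ vertices with exactly $k$ weak kings and exactly $s$ weak serfs, such that exactly $b$ of the weak kings are also weak serfs. *)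

theory Defs
  imports Main
begin

text \<open>An oriented graph on the vertex set V with arc relation A (A u v: arc from u to v).
  Only arcs between vertices of V matter.\<close>
definition oriented_graph :: "'a set \<Rightarrow> ('a \<Rightarrow> 'a \<Rightarrow> bool) \<Rightarrow> bool" where
  "oriented_graph V A \<longleftrightarrow> finite V \<and> (\<forall>u\<in>V. \<not> A u u) \<and>
     (\<forall>u\<in>V. \<forall>v\<in>V. A u v \<longrightarrow> \<not> A v u)"

definition arc10 :: "('a \<Rightarrow> 'a \<Rightarrow> bool) \<Rightarrow> 'a \<Rightarrow> 'a \<Rightarrow> bool" where
  "arc10 A u v \<longleftrightarrow> A u v"

definition arc00 :: "('a \<Rightarrow> 'a \<Rightarrow> bool) \<Rightarrow> 'a \<Rightarrow> 'a \<Rightarrow> bool" where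
  "arc00 A u v \<longleftrightarrow> u \<noteq> v \<and> \<not> A u v \<and> \<not> A v u"

definition weakly_reach2 :: "'a set \<Rightarrow> ('a \<Rightarrow> 'a \<Rightarrow> bool) \<Rightarrow> 'a \<Rightarrow> 'a \<Rightarrow> bool" where
  "weakly_reach2 V A u v \<longleftrightarrow>
     arc10 A u v \<or> arc00 A u v \<or>
     (\<exists>w\<in>V. (arc10 A u w \<and> arc10 A w v) \<or> (arc10 A u w \<and> arc00 A w v)
              \<or> (arc00 A u w \<and> arc10 A w v))"

definition weak_king :: "'a set \<Rightarrow> ('a \<Rightarrow> 'a \<Rightarrow> bool) \<Rightarrow> 'a \<Rightarrow> bool" where
  "weak_king V A u \<longleftrightarrow> u \<in> V \<and> (\<forall>v\<in>V. v \<noteq> u \<longrightarrow> weakly_reach2 V A u v)"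

definition weak_serf :: "'a set \<Rightarrow> ('a \<Rightarrow> 'a \<Rightarrow> bool) \<Rightarrow> 'a \<Rightarrow> bool" where
  "weak_serf V A u \<longleftrightarrow> u \<in> V \<and> (\<forall>v\<in>V. v \<noteq> u \<longrightarrow> weakly_reach2 V A v u)"

definition nksb_oriented_graph ::
  "'a set \<Rightarrow> ('a \<Rightarrow> 'a \<Rightarrow> bool) \<Rightarrow> nat \<Rightarrow> nat \<Rightarrow> nat \<Rightarrow> nat \<Rightarrow> bool" where
  "nksb_oriented_graph V A n k s b \<longleftrightarrow> oriented_graph V A \<and> card V = n \<and>
     card {u\<in>V. weak_king V A u} = k \<and> card {u\<in>V. weak_serf V A u} = s \<and>
     card {u\<in>V. weak_king V A u \<and> weak_serf V A u} = b"

end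

theory Submission
  imports Defs
begin

text \<open>The witness has three levels \<open>[0,a)\<close>, \<open>[a,c)\<close>, \<open>[c,d)\<close>, with an arc from every
  vertex to every vertex of a higher level, plus the isolated vertices \<open>[d,n)\<close>.
  A source weakly reaches every other vertex in one step, so it is a weak king; dually every
  sink is a weak serf. Conversely, the source \<open>0\<close> has an arc to every vertex above level 0 and
  to all of its out-neighbours, so no such vertex weakly reaches \<open>0\<close>; dually the sink \<open>c\<close> is
  not weakly reached by any vertex below the top level. Hence the weak kings are
  \<open>[0,a) \<union> [d,n)\<close>, the weak serfs are \<open>[c,n)\<close>, and the vertices that are both are
  \<open>[d,n)\<close>; choosing \<open>a = k - b\<close>, \<open>c = n - s\<close>, \<open>d = n - b\<close> gives the required counts.\<close>

lemma source_imp_weak_king: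
  assumes "u \<in> V" "\<forall>w. \<not> A w u"
  shows "weak_king V A u"
  using assms unfolding weak_king_def weakly_reach2_def arc10_def arc00_def by blast

lemma sink_imp_weak_serf:
  assumes "u \<in> V" "\<forall>w. \<not> A u w"
  shows "weak_serf V A u"
  using assms unfolding weak_serf_def weakly_reach2_def arc10_def arc00_def by blast

lemma not_weakly_reach2_dominating_source:
  assumes "\<forall>w. \<not> A w v" "A v u" "\<forall>w. A u w \<longrightarrow> A v w"
  shows "\<not> weakly_reach2 V A u v"
  using assms unfolding weakly_reach2_def arc10_def arc00_def by blast

lemma not_weakly_reach2_dominating_sink:
  assumes "\<forall>w. \<not> A v w" "A u v" "\<forall>w. A w u \<longrightarrow> A w v"
  shows "\<not> weakly_reach2 V A v u"
  using assms unfolding weakly_reach2_def arc10_def arc00_def by blast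

definition level :: "nat \<Rightarrow> nat \<Rightarrow> nat \<Rightarrow> nat" where
  "level a c u = (if u < a then 0 else if u < c then 1 else 2)"

definition layered_arc :: "nat \<Rightarrow> nat \<Rightarrow> nat \<Rightarrow> nat \<Rightarrow> nat \<Rightarrow> bool" where
  "layered_arc a c d u v \<longleftrightarrow> u < d \<and> v < d \<and> level a c u < level a c v"

lemma oriented_graph_layered: "oriented_graph {0..<n} (layered_arc a c d)"
  unfolding oriented_graph_def layered_arc_def by auto

lemma layered_weak_king_iff:
  assumes "0 < a" "a \<le> d" "d \<le> n" "u < n"
  shows "weak_king {0..<n} (layered_arc a c d) u \<longleftrightarrow> u < a \<or> d \<le> u"
proof
  assume king: "weak_king {0..<n} (layered_arc a c d) u"
  show "u < a \<or> d \<le> u"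
  proof (rule ccontr)
    assume "\<not> (u < a \<or> d \<le> u)"
    then have "\<not> weakly_reach2 {0..<n} (layered_arc a c d) u 0"
      using assms by (intro not_weakly_reach2_dominating_source)
        (auto simp: layered_arc_def level_def)
    moreover have "u \<noteq> 0" using \<open>\<not> (u < a \<or> d \<le> u)\<close> assms by auto
    ultimately show False using king assms unfolding weak_king_def by auto
  qed
next
  assume "u < a \<or> d \<le> u"
  then show "weak_king {0..<n} (layered_arc a c d) u"
    using assms by (intro source_imp_weak_king) (auto simp: layered_arc_def level_def)
qed

lemma layered_weak_serf_iff:
  assumes "a \<le> c" "c < d" "d \<le> n" "u < n"
  shows "weak_serf {0..<n} (layered_arc a c d) u \<longleftrightarrow> c \<le> u"
proof
  assume serf: "weak_serf {0..<n} (layered_arc a c d) u"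
  show "c \<le> u"
  proof (rule ccontr)
    assume "\<not> c \<le> u"
    then have "\<not> weakly_reach2 {0..<n} (layered_arc a c d) c u"
      using assms by (intro not_weakly_reach2_dominating_sink)
        (auto simp: layered_arc_def level_def)
    then show False using serf \<open>\<not> c \<le> u\<close> assms unfolding weak_serf_def by auto
  qed
next
  assume "c \<le> u"
  then show "weak_serf {0..<n} (layered_arc a c d) u"
    using assms by (intro sink_imp_weak_serf) (auto simp: layered_arc_def level_def)
qed

theorem theorem9:
  fixes n k s b :: nat
  assumes "n \<ge> k" and "k \<ge> s" and "s > b" and "n > 0" and "n \<ge> k + s - b"
  shows "\<exists>A :: nat \<Rightarrow> nat \<Rightarrow> bool. nksb_oriented_graph {0..<n} A n k s b"
proof -
  define a c d where "a = k - b" and "c = n - s" and "d = n - b"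
  have params: "0 < a" "a \<le> c" "c < d" "d \<le> n"
    using assms unfolding a_def c_def d_def by auto
  let ?A = "layered_arc a c d"
  have kings: "{u \<in> {0..<n}. weak_king {0..<n} ?A u} = {0..<a} \<union> {d..<n}"
    using layered_weak_king_iff params by auto
  have serfs: "{u \<in> {0..<n}. weak_serf {0..<n} ?A u} = {c..<n}"
    using layered_weak_serf_iff params by auto
  have both: "{u \<in> {0..<n}. weak_king {0..<n} ?A u \<and> weak_serf {0..<n} ?A u} = {d..<n}"
    using layered_weak_king_iff layered_weak_serf_iff params by auto
  have "card ({0..<a} \<union> {d..<n}) = k"
    using params assms by (subst card_Un_disjoint) (auto simp: a_def d_def)
  then have "nksb_oriented_graph {0..<n} ?A n k s b"
    using oriented_graph_layered kings serfs both assms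
    unfolding nksb_oriented_graph_def by (auto simp: c_def d_def)
  then show ?thesis by blast
qed

end
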